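(* Let $M$ be a total deterministic 2-copy tree-to-word transducer with output alphabet $B$ whose axiom is $q_1(x_1)q_2(x_1)$ for states $q_1,q_2$. Then $M$ is balanced (i.e. $\mathcal{L}(M)=\{\varepsilon\}$) if and only if both of the following hold: (1) $\mathcal{L}(q_1)\subseteq A^*$ and $\overline{\mathcal{L}(q_2)}\subseteq A^*$; (2) $q_1$ and $\bar q_2$ are equivalent, i.e. $[\![q_1]\!](t)=[\![\bar q_2]\!](t)$ for all $t\in\mathcal{T}_\Sigma$.
   Context: Let $A$ be a finite alphabet of opening brackets, $\bar A=\{\bar a\mid a\in A\}$ a disjoint copy of closing brackets, and $B=A\cup\bar A$. Extend $\bar{\cdot}$ to an involution on $B^*$ by $\bar\varepsilon=\varepsilon$, $\bar{\bar a}=a$, $\overline{\alpha\beta}=\bar\beta\,\bar\alpha$, and to languages elementwise. The reduction relation on $B^*$ is $\alpha a\bar a\beta\to\alpha\beta$ for $a\in A$ (only $a\bar a$ cancels, not $\bar a a$); $\rho(\alpha)$ denotes the unique irreducible normal form. Let $\Sigma$ be a finite ranked input alphabet and $\mathcal{T}_\Sigma$ the trees over $\Sigma$. A total deterministic 2-copy tree-to-word transducer has a finite set $Q$ of states and, for every $q\in Q$ and $f\in\Sigma$ of rank $m$, exactly one rule $q(f(x_1,\dots,x_m))\to u_0q_1'(x_{\sigma(1)})u_1\cdots q_n'(x_{\sigma(n)})u_n$ with $q_i'\in Q$, $u_i\in B^*$, $n\le m$, $\sigma$ injective. State semantics: $[\![q]\!](f(t_1,\dots,t_m))=\rho(u_0[\![q_1']\!](t_{\sigma(1)})u_1\cdots[\![q_n']\!](t_{\sigma(n)})u_n)$,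 and $\mathcal{L}(q)=\{[\![q]\!](t)\mid t\in\mathcal{T}_\Sigma\}$. With axiom $q_1(x_1)q_2(x_1)$, $[\![M]\!](t)=\rho([\![q_1]\!](t)[\![q_2]\!](t))$ and $\mathcal{L}(M)=\{[\![M]\!](t)\mid t\in\mathcal T_\Sigma\}$. For a state $q$, $\bar q$ denotes the inverse transduction, obtained from a copy of the rules reachable from $q$ by applying the involution to each right-hand side, so that $[\![\bar q]\!](t)=\overline{[\![q]\!](t)}$ for all $t$. *)

theory Defs
  imports Main
begin

datatype 'a br = Op 'a | Cl 'a   (* Op a = opening bracket a, Cl a = closing bracket \<bar>a *)

fun bar_sym :: "'a br \<Rightarrow> 'a br" where
  "bar_sym (Op a) = Cl a"
| "bar_sym (Cl a) = Op a"

definition bar :: "'a br list \<Rightarrow> 'a br list" where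
  "bar w = rev (map bar_sym w)"

definition red_step :: "('a br list \<times> 'a br list) set" where
  "red_step = {(\<alpha> @ [Op a, Cl a] @ \<beta>, \<alpha> @ \<beta>) | \<alpha> a \<beta>. True}"

definition irreducible :: "'a br list \<Rightarrow> bool" where
  "irreducible w \<longleftrightarrow> (\<nexists>v. (w, v) \<in> red_step)"

definition rho :: "'a br list \<Rightarrow> 'a br list" where
  "rho w = (THE v. (w, v) \<in> red_step\<^sup>* \<and> irreducible v)"

datatype 'f tree = Node 'f "'f tree list"

inductive_set trees :: "('f \<Rightarrow> nat) \<Rightarrow> 'f tree set" for rank where
  "length ts = rank f \<Longrightarrow> (\<forall>t\<in>set ts. t \<in> trees rank) \<Longrightarrow> Node f ts \<in> trees rank"

text \<open>A rule  q(f(x_1..x_m)) -> u_0 q_1(x_{s(1)}) u_1 ... q_n(x_{s(n)}) u_n  is represented as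
  (u_0, [(q_1, s(1)-1, u_1), ..., (q_n, s(n)-1, u_n)]) (child indices 0-based).
  A total deterministic transducer is a function assigning one rule to every (q, f).\<close>

type_synonym ('q, 'a) rhs = "'a br list \<times> ('q \<times> nat \<times> 'a br list) list"

definition wf_rules :: "('f \<Rightarrow> nat) \<Rightarrow> ('q \<Rightarrow> 'f \<Rightarrow> ('q, 'a) rhs) \<Rightarrow> bool" where
  "wf_rules rank R \<longleftrightarrow> (\<forall>q f. distinct (map (\<lambda>(_, i, _). i) (snd (R q f)))
                         \<and> (\<forall>(_, i, _) \<in> set (snd (R q f)). i < rank f))"

function (sequential) sem :: "('q \<Rightarrow> 'f \<Rightarrow> ('q, 'a) rhs) \<Rightarrow> 'q \<Rightarrow> 'f tree \<Rightarrow> 'a br list" where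
  "sem R q (Node f ts) =
     rho (fst (R q f) @
          concat (map (\<lambda>(q', i, u). (if i < length ts then sem R q' (ts ! i) else []) @ u)
                      (snd (R q f))))"
  by pat_completeness auto
termination
  apply (relation "measure (\<lambda>(_, _, t). size t)")
   apply simp
  apply (simp add: less_Suc_eq_le)
  apply (rule size_list_estimation'[OF nth_mem])
   apply assumption
  apply simp
  done

text \<open>Inverse transducer: apply the involution to each right-hand side.
  u_0 q_1 u_1 ... q_n u_n  becomes  bar u_n, q_n, bar u_{n-1}, ..., q_1, bar u_0
  (with all states read in the inverse transducer).\<close>

definition inv_rhs :: "('q, 'a) rhs \<Rightarrow> ('q, 'a) rhs" where
  "inv_rhs r = (let us = fst r # map (\<lambda>(_, _, u). u) (snd r) in
     (bar (last us),
      rev (map2 (\<lambda>(q, i, _) u. (q, i, bar u)) (snd r) (butlast us))))"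

definition inv_rules :: "('q \<Rightarrow> 'f \<Rightarrow> ('q, 'a) rhs) \<Rightarrow> 'q \<Rightarrow> 'f \<Rightarrow> ('q, 'a) rhs" where
  "inv_rules R q f = inv_rhs (R q f)"

definition lang :: "('f \<Rightarrow> nat) \<Rightarrow> ('q \<Rightarrow> 'f \<Rightarrow> ('q, 'a) rhs) \<Rightarrow> 'q \<Rightarrow> 'a br list set" where
  "lang rank R q = sem R q ` trees rank"

definition sem2 :: "('q \<Rightarrow> 'f \<Rightarrow> ('q, 'a) rhs) \<Rightarrow> 'q \<Rightarrow> 'q \<Rightarrow> 'f tree \<Rightarrow> 'a br list" where
  "sem2 R q1 q2 t = rho (sem R q1 t @ sem R q2 t)"

definition lang2 :: "('f \<Rightarrow> nat) \<Rightarrow> ('q \<Rightarrow> 'f \<Rightarrow> ('q, 'a) rhs) \<Rightarrow> 'q \<Rightarrow> 'q \<Rightarrow> 'a br list set" where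
  "lang2 rank R q1 q2 = sem2 R q1 q2 ` trees rank"

definition opening_words :: "'a br list set" where
  "opening_words = {w. set w \<subseteq> range Op}"

end

theory Submission
  imports Defs
begin

text \<open>Normal forms are computed by a stack: reading a word from left to right, a closing
  bracket cancels a matching opening bracket on top of the stack and is pushed otherwise.
  The final stack is irreducible and invariant under reduction, which makes \<open>rho\<close> well
  defined and shows that for irreducible \<open>u\<close>, \<open>v\<close> the word \<open>u v\<close> reduces to the empty word
  iff \<open>u\<close> consists of opening brackets and \<open>v = bar u\<close>. Every output \<open>\<lbrakk>q\<rbrakk>(t)\<close> is a normal
  form and \<open>\<lbrakk>bar q\<rbrakk>(t) = bar \<lbrakk>q\<rbrakk>(t)\<close>, so \<open>M\<close> is balanced iff for every input tree \<open>t\<close>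
  the word \<open>\<lbrakk>q\<^sub>1\<rbrakk>(t)\<close> consists of opening brackets and \<open>\<lbrakk>q\<^sub>2\<rbrakk>(t) = bar \<lbrakk>q\<^sub>1\<rbrakk>(t)\<close>,
  which is conditions (1) and (2).\<close>

lemma irreducible_iff: "irreducible w \<longleftrightarrow> (\<nexists>\<alpha> a \<beta>. w = \<alpha> @ Op a # Cl a # \<beta>)"
  unfolding irreducible_def red_step_def by auto

lemma irreducible_Nil [simp]: "irreducible []"
  and irreducible_singleton [simp]: "irreducible [x]"
  by (auto simp: irreducible_iff Cons_eq_append_conv)

lemma irreducible_Cons_Cons [simp]:
  "irreducible (x # y # w) \<longleftrightarrow> (\<nexists>a. x = Op a \<and> y = Cl a) \<and> irreducible (y # w)"
  unfolding irreducible_iff by (fastforce simp: Cons_eq_append_conv)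

lemma irreducible_ConsD: "irreducible (x # w) \<Longrightarrow> irreducible w"
  by (cases w) auto

lemma irreducible_snoc:
  "irreducible (w @ [x]) \<longleftrightarrow> irreducible w \<and> \<not> (\<exists>a. w \<noteq> [] \<and> last w = Op a \<and> x = Cl a)"
  by (induction w rule: induct_list012) auto

text \<open>The stack holds the normal form of the prefix read so far, reversed, so that its top is
  the last letter.\<close>

fun push :: "'a br \<Rightarrow> 'a br list \<Rightarrow> 'a br list" where
  "push (Cl a) (Op b # s) = (if a = b then s else Cl a # Op b # s)"
| "push x s = x # s"

lemma push_cases:
  obtains a s' where "x = Cl a" "s = Op a # s'" "push x s = s'"
  | "push x s = x # s" "\<nexists>a s'. x = Cl a \<and> s = Op a # s'"
  by (induction x s rule: push.induct) auto

lemma fold_push_red_step: "(w, v) \<in> red_step \<Longrightarrow> fold push w s = fold push v s"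
  unfolding red_step_def by auto

lemma fold_push_rtrancl: "(w, v) \<in> red_step\<^sup>* \<Longrightarrow> fold push w s = fold push v s"
  by (induction rule: rtrancl_induct) (auto dest: fold_push_red_step[where s = s])

lemma reduces_to_fold_push: "(rev s @ w, rev (fold push w s)) \<in> red_step\<^sup>*"
proof (induction w arbitrary: s)
  case (Cons x w)
  have "(rev s @ x # w, rev (push x s) @ w) \<in> red_step\<^sup>*"
  proof (cases x s rule: push_cases)
    case (1 a s')
    then have "(rev s @ x # w, rev (push x s) @ w) \<in> red_step"
      unfolding red_step_def by force
    then show ?thesis ..
  qed simp
  with Cons.IH[of "push x s"] show ?case by simp
qed simp

lemma irreducible_rev_push: "irreducible (rev s) \<Longrightarrow> irreducible (rev (push x s))"
  by (cases x s rule: push_cases) (auto simp: irreducible_snoc last_rev neq_Nil_conv)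

lemma irreducible_rev_fold_push: "irreducible (rev s) \<Longrightarrow> irreducible (rev (fold push w s))"
  by (induction w arbitrary: s) (auto intro: irreducible_rev_push)

text \<open>Below the top of the stack nothing is ever touched by an irreducible word.\<close>

lemma fold_push_irreducible_Cons:
  "irreducible (x # w) \<Longrightarrow> fold push w (x # s) = rev w @ x # s"
proof (induction w arbitrary: x s)
  case (Cons y w)
  then have "push y (x # s) = y # x # s"
    by (cases y "x # s" rule: push_cases) auto
  with Cons show ?case by simp
qed simp

lemma fold_push_irreducible: "irreducible w \<Longrightarrow> fold push w [] = rev w"
  by (cases w) (simp_all add: fold_push_irreducible_Cons)

lemma fold_push_eq_Nil_iff:
  assumes "irreducible v"
  shows "fold push v s = [] \<longleftrightarrow> set s \<subseteq> range Op \<and> v = map bar_sym s"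
  using assms
proof (induction v arbitrary: s)
  case Nil
  then show ?case by auto
next
  case (Cons x v)
  show ?case
  proof (cases x s rule: push_cases)
    case (1 a s')
    then show ?thesis
      using Cons.IH[of s'] irreducible_ConsD[OF Cons.prems] by auto
  next
    case 2
    then show ?thesis
      using fold_push_irreducible_Cons[OF Cons.prems] by (cases s) auto
  qed
qed

lemma rho_eqI:
  assumes "(w, v) \<in> red_step\<^sup>*" and "irreducible v"
  shows "rho w = v"
  unfolding rho_def
proof (rule the_equality)
  fix v' assume "(w, v') \<in> red_step\<^sup>* \<and> irreducible v'"
  with assms show "v' = v"
    by (metis fold_push_irreducible fold_push_rtrancl rev_rev_ident)
qed (use assms in simp)

lemma rho_fold_push: "rho w = rev (fold push w [])"
  using reduces_to_fold_push[of "[]" w] irreducible_rev_fold_push[of "[]" w]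
  by (intro rho_eqI) simp_all

lemma irreducible_rho: "irreducible (rho w)"
  using irreducible_rev_fold_push[of "[]" w] by (simp add: rho_fold_push)

lemma reduces_to_rho: "(w, rho w) \<in> red_step\<^sup>*"
  using reduces_to_fold_push[of "[]" w] by (simp add: rho_fold_push)

lemma rho_append_eq_Nil_iff:
  assumes "irreducible u" and "irreducible v"
  shows "rho (u @ v) = [] \<longleftrightarrow> set u \<subseteq> range Op \<and> v = bar u"
proof -
  have "rho (u @ v) = rev (fold push v (rev u))"
    using assms(1) by (simp add: rho_fold_push fold_push_irreducible)
  then show ?thesis
    using fold_push_eq_Nil_iff[OF assms(2), of "rev u"] by (simp add: bar_def rev_map)
qed

lemma bar_Nil [simp]: "bar [] = []"
  by (simp add: bar_def)

lemma bar_append [simp]: "bar (u @ v) = bar v @ bar u"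
  by (simp add: bar_def)

lemma bar_bar [simp]: "bar (bar w) = w"
proof -
  have "bar_sym (bar_sym x) = x" for x :: "'a br"
    by (cases x) simp_all
  then show ?thesis
    by (simp add: bar_def rev_map comp_def)
qed

lemma bar_red_step: "(w, v) \<in> red_step \<Longrightarrow> (bar w, bar v) \<in> red_step"
  unfolding red_step_def by (force simp: bar_def)

lemma bar_rtrancl: "(w, v) \<in> red_step\<^sup>* \<Longrightarrow> (bar w, bar v) \<in> red_step\<^sup>*"
  by (induction rule: rtrancl_induct) (auto intro: rtrancl_into_rtrancl bar_red_step)

lemma irreducible_bar: "irreducible w \<Longrightarrow> irreducible (bar w)"
  unfolding irreducible_def by (metis bar_bar bar_red_step)

lemma rho_bar: "rho (bar w) = bar (rho w)"
  by (intro rho_eqI bar_rtrancl reduces_to_rho irreducible_bar irreducible_rho)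

definition rhs_word :: "('q, 'a) rhs \<Rightarrow> ('q \<Rightarrow> nat \<Rightarrow> 'a br list) \<Rightarrow> 'a br list" where
  "rhs_word r W = fst r @ concat (map (\<lambda>(q, i, u). W q i @ u) (snd r))"

lemma sem_Node:
  "sem R q (Node f ts) =
     rho (rhs_word (R q f) (\<lambda>q' i. if i < length ts then sem R q' (ts ! i) else []))"
  by (simp add: rhs_word_def)

lemma rhs_word_inv_rhs: "rhs_word (inv_rhs r) (\<lambda>q i. bar (W q i)) = bar (rhs_word r W)"
proof -
  have "rhs_word (inv_rhs (u0, rs)) (\<lambda>q i. bar (W q i)) = bar (rhs_word (u0, rs) W)" for u0 rs
  proof (induction rs arbitrary: u0)
    case (Cons r rs)
    obtain q i u where "r = (q, i, u)"
      by (cases r) auto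
    with Cons.IH[of u] show ?case
      by (simp add: rhs_word_def inv_rhs_def)
  qed (simp add: rhs_word_def inv_rhs_def)
  then show ?thesis
    by (cases r) simp
qed

lemma sem_inv_rules: "sem (inv_rules R) q t = bar (sem R q t)"
proof (induction t arbitrary: q)
  case (Node f ts)
  define W where "W = (\<lambda>q' i. if i < length ts then sem R q' (ts ! i) else [])"
  have "(\<lambda>q' i. if i < length ts then sem (inv_rules R) q' (ts ! i) else []) =
      (\<lambda>q' i. bar (W q' i))"
    using Node.IH by (auto simp: W_def fun_eq_iff)
  then have "sem (inv_rules R) q (Node f ts) =
      rho (rhs_word (inv_rhs (R q f)) (\<lambda>q' i. bar (W q' i)))"
    by (simp only: sem_Node inv_rules_def)
  also have "\<dots> = bar (sem R q (Node f ts))"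
    by (simp only: rhs_word_inv_rhs rho_bar sem_Node W_def)
  finally show ?case .
qed

lemma irreducible_sem: "irreducible (sem R q t)"
  by (cases t) (simp only: sem_Node irreducible_rho)

theorem proposition1:
  fixes rank :: "'f::finite \<Rightarrow> nat"
    and R :: "'q::finite \<Rightarrow> 'f \<Rightarrow> ('q, 'a::finite) rhs"
    and q1 q2 :: 'q
  assumes wf: "wf_rules rank R"
    and nonempty: "trees rank \<noteq> {}"
  shows "lang2 rank R q1 q2 = {[]} \<longleftrightarrow>
         ((lang rank R q1 \<subseteq> opening_words \<and> bar ` lang rank R q2 \<subseteq> opening_words)
          \<and> (\<forall>t\<in>trees rank. sem R q1 t = sem (inv_rules R) q2 t))"
proof -
  have "lang2 rank R q1 q2 = {[]} \<longleftrightarrow> (\<forall>t\<in>trees rank. sem2 R q1 q2 t = [])"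
    using nonempty unfolding lang2_def by auto
  also have "\<dots> \<longleftrightarrow>
      (\<forall>t\<in>trees rank. set (sem R q1 t) \<subseteq> range Op \<and> sem R q2 t = bar (sem R q1 t))"
    by (simp add: sem2_def rho_append_eq_Nil_iff irreducible_sem)
  also have "\<dots> \<longleftrightarrow> ((lang rank R q1 \<subseteq> opening_words \<and> bar ` lang rank R q2 \<subseteq> opening_words)
          \<and> (\<forall>t\<in>trees rank. sem R q1 t = sem (inv_rules R) q2 t))"
    unfolding lang_def opening_words_def sem_inv_rules by (auto simp: image_subset_iff) blast
  finally show ?thesis .
qed

end
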